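(* There exists a constant $\beta>0$ such that the following holds for every $r=r(n)$ with $4\le r$ and $r=o(\log n)$, and every $p=p(n)\ge\beta\frac{\log n}{rn}$. Let $G\in\mathcal G(n,p)$ and let $H$ be the subgraph of $G$ induced by the vertices of degree at most $np/2$. Then with high probability every connected component of $H$ has at most $r-3$ vertices.
   Context: $\mathcal G(n,p)$ is the Erdős–Rényi random graph on vertex set $[n]$ in which each pair is an edge independently with probability $p$. "With high probability" means with probability tending to $1$ as $n\to\infty$. *)

theory Defs
  imports "HOL-Probability.Probability" "HOL-Library.Landau_Symbols"
begin

text \<open>A graph on vertex set {0..<n} is represented by its edge indicator
  G :: nat set \<Rightarrow> bool, where G {u,v} says that uv is an edge.\<close>

definition all_edges :: "nat \<Rightarrow> nat set set" where
  "all_edges n = {{u, v} | u v. u < n \<and> v < n \<and> u \<noteq> v}"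

definition gnp :: "nat \<Rightarrow> real \<Rightarrow> (nat set \<Rightarrow> bool) pmf" where
  "gnp n p = Pi_pmf (all_edges n) False (\<lambda>_. bernoulli_pmf p)"

definition deg :: "nat \<Rightarrow> (nat set \<Rightarrow> bool) \<Rightarrow> nat \<Rightarrow> nat" where
  "deg n G v = card {u. u < n \<and> u \<noteq> v \<and> G {u, v}}"

definition low_vertices :: "nat \<Rightarrow> real \<Rightarrow> (nat set \<Rightarrow> bool) \<Rightarrow> nat set" where
  "low_vertices n p G = {v. v < n \<and> real (deg n G v) \<le> real n * p / 2}"

definition induced_adj :: "nat set \<Rightarrow> (nat set \<Rightarrow> bool) \<Rightarrow> nat \<Rightarrow> nat \<Rightarrow> bool" where
  "induced_adj S G a b \<longleftrightarrow> a \<in> S \<and> b \<in> S \<and> a \<noteq> b \<and> G {a, b}"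

definition component :: "nat set \<Rightarrow> (nat set \<Rightarrow> bool) \<Rightarrow> nat \<Rightarrow> nat set" where
  "component S G v = {w. (induced_adj S G)\<^sup>*\<^sup>* v w}"

end

theory Submission
  imports Defs
begin

text \<open>If \<open>H\<close> has a component with at least \<open>k = r - 2\<close> vertices, that component contains a
  tree on \<open>k\<close> vertices, all of degree at most \<open>np/2\<close> in \<open>G\<close>. For one fixed labelled tree the
  \<open>k - 1\<close> tree edges are present with probability \<open>p^(k-1)\<close>, while the low degrees force
  almost all of the \<open>k(n - k)\<close> edges leaving the tree to be absent; an exponential moment bound
  makes this cost a factor \<open>exp (- knp/20)\<close>. A union bound over the at most
  \<open>(n choose k) k^k\<close> rooted labelled trees leaves \<open>n (e np exp (- np/20))^k \<le> n exp (- knp/80)\<close>,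
  which is at most \<open>1/n\<close> because \<open>knp \<ge> 160 ln n\<close> by the assumption on \<open>p\<close>, and
  \<open>np\<close> is large because \<open>r = o(ln n)\<close>.\<close>

lemma finite_all_edges: "finite (all_edges n)"
proof -
  have "all_edges n \<subseteq> Pow {..<n}" unfolding all_edges_def by auto
  thus ?thesis by (rule finite_subset) simp
qed

lemma finite_set_pmf_gnp: "finite (set_pmf (gnp n p))"
proof -
  have "set_pmf (gnp n p) \<subseteq> (\<lambda>S e. e \<in> S) ` Pow (all_edges n)"
  proof
    fix G assume "G \<in> set_pmf (gnp n p)"
    hence "\<forall>e. e \<notin> all_edges n \<longrightarrow> \<not> G e"
      using set_Pi_pmf_subset[OF finite_all_edges] unfolding gnp_def by fastforce
    hence "G = (\<lambda>e. e \<in> {e. G e})" "{e. G e} \<subseteq> all_edges n" by auto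
    thus "G \<in> (\<lambda>S e. e \<in> S) ` Pow (all_edges n)" by blast
  qed
  thus ?thesis by (rule finite_subset) (simp add: finite_all_edges)
qed

lemma prob_le_expectation_of_ge_one:
  fixes M :: "'a pmf" and f :: "'a \<Rightarrow> real"
  assumes f: "integrable M f" and nonneg: "\<And>x. 0 \<le> f x" and ge: "\<And>x. x \<in> A \<Longrightarrow> 1 \<le> f x"
  shows "measure_pmf.prob M A \<le> measure_pmf.expectation M f"
proof -
  have "measure_pmf.prob M A = measure_pmf.expectation M (indicator A)" by simp
  also have "\<dots> \<le> measure_pmf.expectation M f"
    using nonneg ge
    by (intro integral_mono f measure_pmf.integrable_const_bound[of _ 1]) (auto simp: indicator_def)
  finally show ?thesis .
qed

lemma prod_if_mem_eq_power:
  fixes x :: "'b :: comm_monoid_mult"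
  assumes "finite A" "B \<subseteq> A"
  shows "(\<Prod>e\<in>A. if e \<in> B then x else 1) = x ^ card B"
proof -
  have "{e \<in> A. e \<in> B} = B" using assms(2) by blast
  thus ?thesis using prod.inter_filter[OF assms(1), of "\<lambda>_. x" "\<lambda>e. e \<in> B"] by simp
qed

lemma expectation_gnp_weighted_present:
  fixes c :: real
  assumes T: "T \<subseteq> all_edges n" and C: "C \<subseteq> all_edges n" and TC: "T \<inter> C = {}"
    and p: "0 \<le> p" "p \<le> 1" and c: "0 \<le> c"
  shows "measure_pmf.expectation (gnp n p) (\<lambda>G. of_bool (\<forall>e\<in>T. G e) * c ^ card {e\<in>C. G e})
           = p ^ card T * (1 - p + p * c) ^ card C"
proof -
  define A where "A = all_edges n"
  define f where
    "f = (\<lambda>e b. (if e \<in> T then of_bool b else 1) * (if e \<in> C \<and> b then c else 1 :: real))"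
  have finA: "finite A" unfolding A_def by (rule finite_all_edges)
  have integrand: "of_bool (\<forall>e\<in>T. G e) * c ^ card {e\<in>C. G e} = (\<Prod>e\<in>A. f e (G e))" for G
  proof -
    have "{e \<in> A. e \<in> T} = T" using T unfolding A_def by blast
    hence "(\<Prod>e\<in>A. if e \<in> T then of_bool (G e) else 1 :: real)
             = (\<Prod>e\<in>T. of_bool (G e) :: real)"
      using prod.inter_filter[OF finA, of "\<lambda>e. of_bool (G e) :: real" "\<lambda>e. e \<in> T"] by simp
    also have "\<dots> = of_bool (\<forall>e\<in>T. G e)"
      using finite_subset[OF T finite_all_edges] by (cases "\<forall>e\<in>T. G e") auto
    finally have tree_part:
      "(\<Prod>e\<in>A. if e \<in> T then of_bool (G e) else 1 :: real) = of_bool (\<forall>e\<in>T. G e)" .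
    have "(\<Prod>e\<in>A. if e \<in> C \<and> G e then c else 1) = c ^ card {e\<in>C. G e}"
      using prod_if_mem_eq_power[OF finA, of "{e\<in>C. G e}" c] C unfolding A_def by auto
    with tree_part show ?thesis unfolding f_def prod.distrib by simp
  qed
  have "measure_pmf.expectation (gnp n p) (\<lambda>G. \<Prod>e\<in>A. f e (G e))
          = (\<Prod>e\<in>A. measure_pmf.expectation (bernoulli_pmf p) (f e))"
    unfolding gnp_def A_def
    by (rule expectation_prod_Pi_pmf[OF finite_all_edges])
       (auto simp: f_def c intro: integrable_measure_pmf_finite)
  also have "\<dots> = (\<Prod>e\<in>A. (if e \<in> T then p else 1) * (if e \<in> C then 1 - p + p * c else 1))"
    using TC p by (intro prod.cong) (auto simp: f_def)
  also have "\<dots> = p ^ card T * (1 - p + p * c) ^ card C"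
    unfolding prod.distrib using finA T C by (simp add: A_def prod_if_mem_eq_power)
  finally show ?thesis by (simp add: integrand)
qed

definition cross_edges :: "nat \<Rightarrow> nat set \<Rightarrow> nat set set" where
  "cross_edges n X = {{u, y} | u y. u < n \<and> u \<notin> X \<and> y \<in> X}"

lemma cross_edges_subset_all_edges: "X \<subseteq> {..<n} \<Longrightarrow> cross_edges n X \<subseteq> all_edges n"
  unfolding cross_edges_def all_edges_def by blast

lemma card_cross_edges_ge:
  assumes X: "X \<subseteq> {..<n}"
  shows "card X * (n - card X) \<le> card (cross_edges n X)"
proof -
  define U where "U = {..<n} - X"
  have "inj_on (\<lambda>(u, y). {u, y}) (U \<times> X)"
    unfolding U_def by (auto simp: inj_on_def doubleton_eq_iff)
  moreover have "(\<lambda>(u, y). {u, y}) ` (U \<times> X) \<subseteq> cross_edges n X"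
    unfolding U_def cross_edges_def by auto
  moreover have "finite (cross_edges n X)"
    using finite_subset[OF cross_edges_subset_all_edges[OF X] finite_all_edges] .
  ultimately have "card (U \<times> X) \<le> card (cross_edges n X)"
    using card_inj_on_le by blast
  moreover have "card U = n - card X"
    unfolding U_def using X by (simp add: card_Diff_subset finite_subset)
  ultimately show ?thesis by (simp add: card_cartesian_product mult.commute)
qed

lemma card_present_cross_edges_le_sum_deg:
  assumes "finite X"
  shows "card {e \<in> cross_edges n X. G e} \<le> (\<Sum>y\<in>X. deg n G y)"
proof -
  define N where "N = (\<lambda>y. {u. u < n \<and> u \<notin> X \<and> G {u, y}})"
  have "{e \<in> cross_edges n X. G e} \<subseteq> (\<Union>y\<in>X. (\<lambda>u. {u, y}) ` N y)"
    unfolding cross_edges_def N_def by auto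
  hence "card {e \<in> cross_edges n X. G e} \<le> card (\<Union>y\<in>X. (\<lambda>u. {u, y}) ` N y)"
    by (intro card_mono) (auto simp: N_def assms)
  also have "\<dots> \<le> (\<Sum>y\<in>X. card ((\<lambda>u. {u, y}) ` N y))"
    by (rule card_UN_le[OF assms])
  also have "\<dots> \<le> (\<Sum>y\<in>X. deg n G y)"
  proof (rule sum_mono)
    fix y assume "y \<in> X"
    hence "N y \<subseteq> {u. u < n \<and> u \<noteq> y \<and> G {u, y}}" unfolding N_def by auto
    hence "card (N y) \<le> deg n G y" unfolding deg_def by (intro card_mono) auto
    moreover have "finite (N y)" unfolding N_def by simp
    ultimately show "card ((\<lambda>u. {u, y}) ` N y) \<le> deg n G y"
      using card_image_le order_trans by blast
  qed
  finally show ?thesis .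
qed

definition tree_edges :: "nat set \<Rightarrow> nat \<Rightarrow> (nat \<Rightarrow> nat) \<Rightarrow> nat set set" where
  "tree_edges X rt par = (\<lambda>y. {y, par y}) ` (X - {rt})"

definition low_tree_event ::
    "nat \<Rightarrow> real \<Rightarrow> nat set \<Rightarrow> nat \<Rightarrow> (nat \<Rightarrow> nat) \<Rightarrow> (nat set \<Rightarrow> bool) set" where
  "low_tree_event n p X rt par = {G. (\<forall>e\<in>tree_edges X rt par. G e) \<and> X \<subseteq> low_vertices n p G}"

text \<open>On the event at most \<open>card X * n * p / 2\<close> cross edges are present, so the weight
  \<open>exp (card X * n * p / 2) * exp (-1) ^ (number of present cross edges)\<close> is at least 1 there,
  and its expectation factorises over the edges.\<close>
lemma prob_low_tree_event_le:
  fixes p :: real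
  assumes X: "X \<subseteq> {..<n}" "rt \<in> X"
    and par: "\<forall>y\<in>X - {rt}. par y \<in> X \<and> par y \<noteq> y"
    and inj: "inj_on (\<lambda>y. {y, par y}) (X - {rt})"
    and p: "0 \<le> p" "p \<le> 1"
  shows "measure_pmf.prob (gnp n p) (low_tree_event n p X rt par)
           \<le> exp (card X * n * p / 2) * p ^ (card X - 1)
               * (1 - p + p * exp (-1)) ^ (card X * (n - card X))"
proof -
  define T where "T = tree_edges X rt par"
  define C where "C = cross_edges n X"
  define q where "q = 1 - p + p * exp (-1)"
  define w where
    "w = (\<lambda>G. exp (card X * n * p / 2) * (of_bool (\<forall>e\<in>T. G e) * exp (-1) ^ card {e\<in>C. G e}))"
  have finX: "finite X" using X(1) finite_subset by blast
  have T: "T \<subseteq> all_edges n" unfolding T_def tree_edges_def all_edges_def using X(1) par by blast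
  have C: "C \<subseteq> all_edges n" unfolding C_def using cross_edges_subset_all_edges[OF X(1)] .
  have TC: "T \<inter> C = {}" unfolding T_def tree_edges_def C_def cross_edges_def using par
    by (auto simp: doubleton_eq_iff)
  have w_ge_1: "1 \<le> w G" if G: "G \<in> low_tree_event n p X rt par" for G
  proof -
    have "real (card {e\<in>C. G e}) \<le> (\<Sum>y\<in>X. real (deg n G y))"
      using card_present_cross_edges_le_sum_deg[OF finX]
      unfolding C_def of_nat_sum[symmetric] of_nat_le_iff .
    also have "\<dots> \<le> (\<Sum>y\<in>X. n * p / 2)"
      using G by (intro sum_mono) (auto simp: low_tree_event_def low_vertices_def)
    finally have "real (card {e\<in>C. G e}) \<le> card X * n * p / 2" by simp
    moreover have "\<forall>e\<in>T. G e" using G unfolding low_tree_event_def T_def by blast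
    ultimately show ?thesis
      by (simp add: w_def exp_of_nat_mult[symmetric] mult_exp_exp)
  qed
  have "measure_pmf.prob (gnp n p) (low_tree_event n p X rt par)
          \<le> measure_pmf.expectation (gnp n p) w"
    using w_ge_1
    by (intro prob_le_expectation_of_ge_one integrable_measure_pmf_finite finite_set_pmf_gnp)
       (auto simp: w_def)
  also have "\<dots> = exp (card X * n * p / 2) * (p ^ card T * q ^ card C)"
    unfolding w_def q_def using expectation_gnp_weighted_present[OF T C TC p] by simp
  also have "card T = card X - 1"
    unfolding T_def tree_edges_def using inj X finX by (simp add: card_image)
  also have "q ^ card C \<le> q ^ (card X * (n - card X))"
    using card_cross_edges_ge[OF X(1)] p unfolding C_def q_def
    by (intro power_decreasing) (auto intro: mult_left_le)
  finally show ?thesis unfolding q_def using p by (simp add: mult_left_mono mult.assoc)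
qed

text \<open>The \<open>birth\<close> of a vertex is the time it was attached to the tree; as it decreases along
  parent pointers, no two vertices are each other's parent, so the parent edges are distinct.\<close>
definition rooted_subtree ::
    "('a \<Rightarrow> 'a \<Rightarrow> bool) \<Rightarrow> 'a \<Rightarrow> 'a set \<Rightarrow> ('a \<Rightarrow> 'a) \<Rightarrow> ('a \<Rightarrow> nat) \<Rightarrow> bool" where
  "rooted_subtree R rt X par birth \<longleftrightarrow>
     rt \<in> X \<and> par \<in> (X - {rt}) \<rightarrow>\<^sub>E X \<and> (\<forall>y\<in>X - {rt}. R y (par y) \<and> birth (par y) < birth y)"

lemma rooted_subtree_singleton: "rooted_subtree R rt {rt} (\<lambda>_. undefined) (\<lambda>_. 0)"
  unfolding rooted_subtree_def by auto

lemma rooted_subtree_insert: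
  assumes tree: "rooted_subtree R rt X par birth" and "finite X"
    and a: "a \<in> X" and b: "b \<notin> X" "R b a"
  shows "rooted_subtree R rt (insert b X) (par(b := a)) (birth(b := Suc (Max (birth ` X))))"
proof -
  have birth_lt: "birth y < Suc (Max (birth ` X))" if "y \<in> X" for y
    using Max_ge[of "birth ` X"] \<open>finite X\<close> that by (simp add: le_imp_less_Suc)
  have par_X: "par y \<in> X" if "y \<in> X - {rt}" for y
    using tree that unfolding rooted_subtree_def by blast
  show ?thesis
    using tree a b birth_lt par_X
    unfolding rooted_subtree_def PiE_def extensional_def by (auto split: if_splits)
qed

lemma rooted_subtree_inj_parent_edges:
  assumes "rooted_subtree R rt X par birth"
  shows "inj_on (\<lambda>y. {y, par y}) (X - {rt})"
proof (rule inj_onI, rule ccontr)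
  fix y z assume yz: "y \<in> X - {rt}" "z \<in> X - {rt}" "{y, par y} = {z, par z}" "y \<noteq> z"
  hence "y = par z" "z = par y" by (auto simp: doubleton_eq_iff)
  moreover have "birth (par z) < birth z" "birth (par y) < birth y"
    using yz(1,2) assms unfolding rooted_subtree_def by auto
  ultimately show False by simp
qed

lemma rtranclp_leaves_set:
  assumes "R\<^sup>*\<^sup>* v w" "v \<in> X" "w \<notin> X"
  shows "\<exists>a b. a \<in> X \<and> b \<notin> X \<and> R a b \<and> R\<^sup>*\<^sup>* v b"
  using assms by (induction rule: rtranclp_induct) (auto intro: rtranclp.rtrancl_into_rtrancl)

lemma rooted_subtree_exists:
  assumes R: "symp R" and fin: "finite {w. R\<^sup>*\<^sup>* v w}"
    and j: "1 \<le> j" "j \<le> card {w. R\<^sup>*\<^sup>* v w}"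
  shows "\<exists>X par birth. X \<subseteq> {w. R\<^sup>*\<^sup>* v w} \<and> card X = j \<and> rooted_subtree R v X par birth"
  using j
proof (induction j rule: dec_induct)
  case base
  have "{v} \<subseteq> {w. R\<^sup>*\<^sup>* v w} \<and> card {v} = 1 \<and> rooted_subtree R v {v} (\<lambda>_. undefined) (\<lambda>_. 0)"
    using rooted_subtree_singleton by simp
  thus ?case by blast
next
  case (step m)
  from step.IH step.prems obtain X par birth
    where X: "X \<subseteq> {w. R\<^sup>*\<^sup>* v w}" "card X = m" "rooted_subtree R v X par birth"
    by (meson Suc_leD)
  have "finite X" using X(1) fin finite_subset by blast
  have "X \<noteq> {w. R\<^sup>*\<^sup>* v w}" using X(2) step.prems by auto
  then obtain w where w: "R\<^sup>*\<^sup>* v w" "w \<notin> X" using X(1) by blast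
  have "v \<in> X" using X(3) unfolding rooted_subtree_def by blast
  then obtain a b where ab: "a \<in> X" "b \<notin> X" "R a b" "R\<^sup>*\<^sup>* v b"
    using rtranclp_leaves_set[OF w(1) _ w(2)] by blast
  have "rooted_subtree R v (insert b X) (par(b := a)) (birth(b := Suc (Max (birth ` X))))"
    using rooted_subtree_insert[OF X(3) \<open>finite X\<close> ab(1,2) sympD[OF R ab(3)]] .
  moreover have "insert b X \<subseteq> {w. R\<^sup>*\<^sup>* v w}" using X(1) ab(4) by blast
  moreover have "card (insert b X) = Suc m" using X(2) ab(2) \<open>finite X\<close> by simp
  ultimately show ?case by blast
qed

lemma symp_induced_adj: "symp (induced_adj S G)"
  unfolding symp_def induced_adj_def by (auto simp: insert_commute)

lemma component_subset:
  assumes "v \<in> S"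
  shows "component S G v \<subseteq> S"
proof
  fix w assume "w \<in> component S G v"
  hence "(induced_adj S G)\<^sup>*\<^sup>* v w" unfolding component_def by simp
  thus "w \<in> S" using assms by (induction rule: rtranclp_induct) (auto simp: induced_adj_def)
qed

definition parent_maps :: "nat \<Rightarrow> nat \<Rightarrow> (nat set \<times> nat \<times> (nat \<Rightarrow> nat)) set" where
  "parent_maps n k = {(X, rt, par). X \<subseteq> {..<n} \<and> card X = k \<and> rt \<in> X
      \<and> par \<in> (X - {rt}) \<rightarrow>\<^sub>E X \<and> (\<forall>y\<in>X - {rt}. par y \<noteq> y)
      \<and> inj_on (\<lambda>y. {y, par y}) (X - {rt})}"

lemma large_low_component_subset:
  assumes k: "1 \<le> k"
  shows "{G. \<exists>v\<in>low_vertices n p G. k \<le> card (component (low_vertices n p G) G v)}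
           \<subseteq> (\<Union>(X, rt, par) \<in> parent_maps n k. low_tree_event n p X rt par)"
proof
  fix G assume "G \<in> {G. \<exists>v\<in>low_vertices n p G. k \<le> card (component (low_vertices n p G) G v)}"
  then obtain v where v: "v \<in> low_vertices n p G"
    and large: "k \<le> card (component (low_vertices n p G) G v)"
    by blast
  define S where "S = low_vertices n p G"
  have S: "S \<subseteq> {..<n}" unfolding S_def low_vertices_def by auto
  have comp: "component S G v \<subseteq> S" using component_subset v unfolding S_def by blast
  have "finite (component S G v)" using finite_subset[OF subset_trans[OF comp S]] by simp
  moreover have "k \<le> card (component S G v)" using large unfolding S_def .
  ultimately have "\<exists>X par birth. X \<subseteq> component S G v \<and> card X = k
                     \<and> rooted_subtree (induced_adj S G) v X par birth"
    unfolding component_def by (rule rooted_subtree_exists[OF symp_induced_adj _ k])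
  then obtain X par birth where X: "X \<subseteq> component S G v" "card X = k"
    and tree: "rooted_subtree (induced_adj S G) v X par birth"
    by blast
  have XS: "X \<subseteq> S" using X(1) comp by blast
  have edges: "\<forall>y\<in>X - {v}. induced_adj S G y (par y)"
    and par: "par \<in> (X - {v}) \<rightarrow>\<^sub>E X" "v \<in> X"
    using tree unfolding rooted_subtree_def by blast+
  have "\<forall>y\<in>X - {v}. par y \<noteq> y" using edges unfolding induced_adj_def by metis
  hence "(X, v, par) \<in> parent_maps n k"
    using X(2) subset_trans[OF XS S] par rooted_subtree_inj_parent_edges[OF tree]
    by (simp add: parent_maps_def)
  moreover have "G \<in> low_tree_event n p X v par"
    using edges XS unfolding low_tree_event_def tree_edges_def by (auto simp: induced_adj_def S_def)
  ultimately show "G \<in> (\<Union>(X, rt, par) \<in> parent_maps n k. low_tree_event n p X rt par)"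
    by (intro UN_I[of "(X, v, par)"]) simp_all
qed

definition parent_map_candidates :: "nat \<Rightarrow> nat \<Rightarrow> (nat set \<times> nat \<times> (nat \<Rightarrow> nat)) set" where
  "parent_map_candidates n k =
     (SIGMA X:{X. X \<subseteq> {..<n} \<and> card X = k}. SIGMA rt:X. (X - {rt}) \<rightarrow>\<^sub>E X)"

lemma parent_maps_subset_candidates: "parent_maps n k \<subseteq> parent_map_candidates n k"
  unfolding parent_maps_def parent_map_candidates_def by blast

lemma finite_subsets_lessThan: "finite {X. X \<subseteq> {..<n :: nat} \<and> card X = k}"
  by (rule finite_subset[of _ "Pow {..<n}"]) auto

lemma card_parent_map_candidates:
  "card (parent_map_candidates n k) = (n choose k) * (k * k ^ (k - 1))"
proof -
  define Xs where "Xs = {X. X \<subseteq> {..<n} \<and> card X = k}"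
  have finX: "finite X" if "X \<in> Xs" for X
    using that unfolding Xs_def by (metis finite_lessThan finite_subset mem_Collect_eq)
  have card_trees: "card (SIGMA rt:X. (X - {rt}) \<rightarrow>\<^sub>E X) = k * k ^ (k - 1)" if X: "X \<in> Xs" for X
  proof -
    have "card (SIGMA rt:X. (X - {rt}) \<rightarrow>\<^sub>E X) = (\<Sum>rt\<in>X. card ((X - {rt}) \<rightarrow>\<^sub>E X))"
      by (rule card_SigmaI[OF finX[OF X]]) (simp add: finX[OF X] finite_PiE)
    also have "\<dots> = (\<Sum>rt\<in>X. k ^ (k - 1))"
    proof (rule sum.cong[OF refl])
      fix rt assume "rt \<in> X"
      moreover have "card X = k" using X unfolding Xs_def by blast
      ultimately show "card ((X - {rt}) \<rightarrow>\<^sub>E X) = k ^ (k - 1)"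
        using finX[OF X] by (simp add: card_funcsetE)
    qed
    also have "\<dots> = k * k ^ (k - 1)" using X unfolding Xs_def by simp
    finally show ?thesis .
  qed
  have "\<forall>X\<in>Xs. finite (SIGMA rt:X. (X - {rt}) \<rightarrow>\<^sub>E X)"
    using finX by (simp add: finite_PiE)
  hence "card (parent_map_candidates n k) = (\<Sum>X\<in>Xs. card (SIGMA rt:X. (X - {rt}) \<rightarrow>\<^sub>E X))"
    unfolding parent_map_candidates_def Xs_def[symmetric]
    by (rule card_SigmaI[OF finite_subsets_lessThan[of n k, folded Xs_def]])
  also have "\<dots> = (\<Sum>X\<in>Xs. k * k ^ (k - 1))" using card_trees by (rule sum.cong[OF refl])
  also have "\<dots> = (n choose k) * (k * k ^ (k - 1))"
    unfolding Xs_def using n_subsets[of "{..<n}" k] by simp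
  finally show ?thesis .
qed

lemma finite_parent_map_candidates: "finite (parent_map_candidates n k)"
  unfolding parent_map_candidates_def
proof (rule finite_SigmaI[OF finite_subsets_lessThan])
  fix X assume "X \<in> {X. X \<subseteq> {..<n} \<and> card X = k}"
  hence "finite X" by (metis finite_lessThan finite_subset mem_Collect_eq)
  thus "finite (SIGMA rt:X. (X - {rt}) \<rightarrow>\<^sub>E X)" by (simp add: finite_PiE)
qed

lemma finite_parent_maps: "finite (parent_maps n k)"
  using finite_subset[OF parent_maps_subset_candidates finite_parent_map_candidates] .

lemma card_parent_maps_le: "card (parent_maps n k) \<le> (n choose k) * k ^ k"
proof -
  have "card (parent_maps n k) \<le> card (parent_map_candidates n k)"
    by (rule card_mono[OF finite_parent_map_candidates parent_maps_subset_candidates])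
  also have "\<dots> = (n choose k) * (k * k ^ (k - 1))" by (rule card_parent_map_candidates)
  also have "k * k ^ (k - 1) \<le> k ^ k" by (cases k) simp_all
  finally show ?thesis by simp
qed

lemma exp_neg_one_le: "exp (-1) \<le> (2/5 :: real)"
proof -
  have "5/2 \<le> exp (1::real)" using e_approx_32 by (simp add: abs_if split: if_split_asm)
  thus ?thesis by (simp add: exp_minus field_simps)
qed

lemma pow_div_fact_le_exp:
  fixes x :: real
  assumes "0 \<le> x"
  shows "x ^ k / fact k \<le> exp x"
proof -
  have "(\<lambda>m. x ^ m / fact m) sums exp x"
    using exp_converges[of x] by (simp add: divide_inverse scaleR_conv_of_real mult.commute)
  thus ?thesis
    using sum_le_suminf[of "\<lambda>m. x ^ m / fact m" "{k}"] assms by (simp add: sums_iff)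
qed

lemma binomial_mul_pow_self_le:
  "real (n choose k) * real k ^ k \<le> real n ^ k * exp (real k)"
proof -
  have "real (n choose k) * fact k \<le> real n ^ k"
    using binomial_fact_pow[of n k] by (metis of_nat_fact of_nat_le_iff of_nat_mult of_nat_power)
  moreover have "real k ^ k / fact k \<le> exp (real k)" by (rule pow_div_fact_le_exp) simp
  ultimately have "(real (n choose k) * fact k) * (real k ^ k / fact k) \<le> real n ^ k * exp (real k)"
    by (intro mult_mono) auto
  thus ?thesis by simp
qed

lemma exp_mul_cross_factor_le:
  fixes p :: real
  assumes kn: "12 * k \<le> n" and p: "0 \<le> p" "p \<le> 1"
  shows "exp (real k * real n * p / 2) * (1 - p + p * exp (-1)) ^ (k * (n - k))
           \<le> exp (- (real k * (real n * p)) / 20)"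
proof -
  have "1 - p + p * exp (-1) \<le> 1 + (- (3/5) * p)"
    using mult_left_mono[OF exp_neg_one_le p(1)] by simp
  also have "\<dots> \<le> exp (- (3/5) * p)" by (rule exp_ge_add_one_self)
  finally have q: "1 - p + p * exp (-1) \<le> exp (- (3/5) * p)" .
  have "12 * real k \<le> real n" using of_nat_le_iff[of "12 * k" n] kn by simp
  hence "real k * (12 * real k) \<le> real k * real n" by (rule mult_left_mono) simp
  hence m: "11/12 * (real k * real n) \<le> real (k * (n - k))"
    using kn by (simp add: of_nat_diff algebra_simps)
  have "(1 - p + p * exp (-1)) ^ (k * (n - k)) \<le> exp (- (3/5) * p) ^ (k * (n - k))"
    using q p by (intro power_mono) (auto intro: add_nonneg_nonneg)
  also have "\<dots> = exp (- (3/5) * p * (k * (n - k)))"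
    by (simp add: exp_of_nat_mult[symmetric] mult.commute)
  also have "\<dots> \<le> exp (- (3/5) * p * (11/12 * (real k * real n)))"
    using mult_left_mono[OF m, of "(3/5) * p"] p by simp
  finally have "exp (real k * real n * p / 2) * (1 - p + p * exp (-1)) ^ (k * (n - k))
      \<le> exp (real k * real n * p / 2) * exp (- (3/5) * p * (11/12 * (real k * real n)))"
    by (rule mult_left_mono) simp
  also have "\<dots> = exp (real k * real n * p / 2 + - (3/5) * p * (11/12 * (real k * real n)))"
    by (rule mult_exp_exp)
  also have "real k * real n * p / 2 + - (3/5) * p * (11/12 * (real k * real n))
               = - (real k * (real n * p)) / 20"
    by (simp add: field_simps)
  finally show ?thesis .
qed

lemma mul_exp_one_le_exp:
  fixes d :: real
  assumes "10000 \<le> d"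
  shows "d * exp 1 \<le> exp (3 * d / 80)"
proof -
  have "3 * d / 160 \<le> exp (3 * d / 160)" using exp_ge_add_one_self[of "3 * d / 160"] by linarith
  hence "(3 * d / 160) ^ 2 \<le> exp (3 * d / 160) ^ 2" using assms by (intro power_mono) auto
  also have "\<dots> = exp (3 * d / 80)" by (simp add: exp_of_nat_mult[symmetric])
  finally have "(3 * d / 160) ^ 2 \<le> exp (3 * d / 80)" .
  moreover have "d * exp 1 \<le> d * 3" using assms exp_le by (intro mult_left_mono) auto
  moreover have "d * 3 \<le> (3 * d / 160) ^ 2" using assms by (simp add: power2_eq_square)
  ultimately show ?thesis by linarith
qed

lemma union_bound_le_inverse:
  fixes p :: real
  assumes k: "1 \<le> k" and kn: "12 * k \<le> n" and p: "0 \<le> p" "p \<le> 1"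
    and d: "10000 \<le> real n * p" and kd: "160 * ln (real n) \<le> real k * (real n * p)"
  shows "real (n choose k) * real k ^ k
           * (exp (real k * real n * p / 2) * p ^ (k - 1) * (1 - p + p * exp (-1)) ^ (k * (n - k)))
         \<le> 1 / real n"
proof -
  define d where "d = real n * p"
  have n: "1 \<le> real n" using kn k by simp
  have "real (n choose k) * real k ^ k
          * (exp (real k * real n * p / 2) * p ^ (k - 1) * (1 - p + p * exp (-1)) ^ (k * (n - k)))
        = (real (n choose k) * real k ^ k) * p ^ (k - 1)
          * (exp (real k * real n * p / 2) * (1 - p + p * exp (-1)) ^ (k * (n - k)))"
    by (simp only: mult_ac)
  also have "\<dots> \<le> (real n ^ k * exp (real k)) * p ^ (k - 1) * exp (- (real k * d) / 20)"
  proof (rule mult_mono)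
    show "real (n choose k) * real k ^ k * p ^ (k - 1) \<le> real n ^ k * exp (real k) * p ^ (k - 1)"
      using p by (intro mult_right_mono binomial_mul_pow_self_le) simp
    show "exp (real k * real n * p / 2) * (1 - p + p * exp (-1)) ^ (k * (n - k))
            \<le> exp (- (real k * d) / 20)"
      using exp_mul_cross_factor_le[OF kn p] unfolding d_def by simp
  qed (use p in \<open>auto intro: add_nonneg_nonneg\<close>)
  also have "\<dots> = (real n ^ k * p ^ (k - 1)) * (exp (real k) * exp (- (real k * d) / 20))"
    by (simp only: mult_ac)
  also have "\<dots> \<le> (real n * d ^ k) * (exp (real k) * exp (- (real k * d) / 20))"
  proof (rule mult_right_mono)
    have "real n ^ k * p ^ (k - 1) = real n * d ^ (k - 1)"
      using k unfolding d_def by (cases k) (simp_all add: power_mult_distrib)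
    also have "\<dots> \<le> real n * d ^ k"
      using d unfolding d_def by (intro mult_left_mono power_increasing) auto
    finally show "real n ^ k * p ^ (k - 1) \<le> real n * d ^ k" .
  qed simp
  also have "\<dots> = real n * (d * exp (1 - d / 20)) ^ k"
    by (simp add: power_mult_distrib exp_of_nat_mult[symmetric] mult_exp_exp algebra_simps)
  also have "\<dots> \<le> real n * exp (- d / 80) ^ k"
  proof -
    have "d * exp (1 - d / 20) = d * exp 1 * exp (- d / 20)" by (simp add: mult_exp_exp)
    also have "\<dots> \<le> exp (3 * d / 80) * exp (- d / 20)"
      using mul_exp_one_le_exp d unfolding d_def by (intro mult_right_mono) auto
    also have "\<dots> = exp (- d / 80)" by (simp add: mult_exp_exp)
    finally show ?thesis using d unfolding d_def by (intro mult_left_mono power_mono) auto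
  qed
  also have "exp (- d / 80) ^ k \<le> exp (- 2 * ln (real n))"
    using kd unfolding d_def by (simp add: exp_of_nat_mult[symmetric])
  also have "- 2 * ln (real n) = ln (1 / real n ^ 2)" using n by (simp add: ln_div ln_realpow)
  also have "exp (ln (1 / real n ^ 2)) = 1 / real n ^ 2" using n by simp
  finally show ?thesis using n by (simp add: power2_eq_square)
qed

lemma prob_large_low_component_le:
  fixes p :: real
  assumes k: "1 \<le> k" and kn: "12 * k \<le> n" and p: "0 \<le> p" "p \<le> 1"
    and d: "10000 \<le> real n * p" and kd: "160 * ln (real n) \<le> real k * (real n * p)"
  shows "measure_pmf.prob (gnp n p)
           {G. \<exists>v\<in>low_vertices n p G. k \<le> card (component (low_vertices n p G) G v)} \<le> 1 / real n"
proof -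
  define bound where
    "bound = exp (real k * real n * p / 2) * p ^ (k - 1) * (1 - p + p * exp (-1)) ^ (k * (n - k))"
  have "measure_pmf.prob (gnp n p)
          {G. \<exists>v\<in>low_vertices n p G. k \<le> card (component (low_vertices n p G) G v)}
        \<le> measure_pmf.prob (gnp n p)
            (\<Union>(X, rt, par) \<in> parent_maps n k. low_tree_event n p X rt par)"
    by (rule measure_pmf.finite_measure_mono[OF large_low_component_subset[OF k]]) simp
  also have "\<dots> \<le> (\<Sum>t \<in> parent_maps n k.
                      measure_pmf.prob (gnp n p) (case t of (X, rt, par) \<Rightarrow> low_tree_event n p X rt par))"
    by (rule measure_pmf.finite_measure_subadditive_finite[OF finite_parent_maps]) simp
  also have "\<dots> \<le> (\<Sum>_ \<in> parent_maps n k. bound)"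
  proof (rule sum_mono)
    fix t assume "t \<in> parent_maps n k"
    then obtain X rt par where t: "t = (X, rt, par)" "X \<subseteq> {..<n}" "card X = k" "rt \<in> X"
      "par \<in> (X - {rt}) \<rightarrow>\<^sub>E X" "\<forall>y\<in>X - {rt}. par y \<noteq> y"
      "inj_on (\<lambda>y. {y, par y}) (X - {rt})"
      unfolding parent_maps_def by auto
    hence par: "\<forall>y\<in>X - {rt}. par y \<in> X \<and> par y \<noteq> y" by (auto simp: PiE_mem)
    show "measure_pmf.prob (gnp n p) (case t of (X, rt, par) \<Rightarrow> low_tree_event n p X rt par)
            \<le> bound"
      using prob_low_tree_event_le[OF t(2,4) par t(7) p] unfolding t(1) bound_def t(3) by simp
  qed
  also have "\<dots> \<le> real (n choose k) * real k ^ k * bound"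
  proof -
    have "real (card (parent_maps n k)) \<le> real (n choose k) * real k ^ k"
      using card_parent_maps_le by (metis of_nat_le_iff of_nat_mult of_nat_power)
    moreover have "0 \<le> bound" using p unfolding bound_def by (auto intro: add_nonneg_nonneg)
    ultimately show ?thesis by (simp add: mult_right_mono)
  qed
  also have "\<dots> \<le> 1 / real n" unfolding bound_def by (rule union_bound_le_inverse[OF assms])
  finally show ?thesis .
qed

lemma prob_low_components_small_ge:
  fixes p :: real
  assumes r: "4 \<le> r" and n: "3 \<le> n" and r_small: "real r \<le> ln (real n) / 32"
    and p_large: "320 * ln (real n) \<le> real r * (real n * p)" and p: "0 \<le> p" "p \<le> 1"
  shows "1 - 1 / real n \<le> measure_pmf.prob (gnp n p)
           {G. \<forall>v\<in>low_vertices n p G. card (component (low_vertices n p G) G v) \<le> r - 3}"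
proof -
  define k where "k = r - 2"
  define Bad where
    "Bad = {G. \<exists>v\<in>low_vertices n p G. k \<le> card (component (low_vertices n p G) G v)}"
  have ln_ge_1: "1 \<le> ln (real n)"
    using exp_le n by (subst ln_ge_iff) auto
  have "real (12 * k) \<le> real n"
    using r_small ln_le_minus_one[of "real n"] n unfolding k_def by simp
  hence kn: "12 * k \<le> n" by (simp only: of_nat_le_iff)
  have np: "0 \<le> real n * p" using p by simp
  have "320 * ln (real n) \<le> ln (real n) / 32 * (real n * p)"
    using p_large mult_right_mono[OF r_small np] by linarith
  hence "ln (real n) * 10240 \<le> ln (real n) * (real n * p)" by (simp add: algebra_simps)
  hence d: "10000 \<le> real n * p" using ln_ge_1 by (subst (asm) mult_le_cancel_left) auto
  have "real r * (real n * p) \<le> 2 * real k * (real n * p)"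
    using r np unfolding k_def by (intro mult_right_mono) auto
  hence kd: "160 * ln (real n) \<le> real k * (real n * p)" using p_large by linarith
  have "measure_pmf.prob (gnp n p) Bad \<le> 1 / real n"
    unfolding Bad_def using r kn p d kd by (intro prob_large_low_component_le) (auto simp: k_def)
  moreover have "c \<le> r - 3 \<longleftrightarrow> \<not> k \<le> c" for c using r unfolding k_def by auto
  hence "{G. \<forall>v\<in>low_vertices n p G. card (component (low_vertices n p G) G v) \<le> r - 3}
           = space (measure_pmf (gnp n p)) - Bad"
    unfolding Bad_def by auto
  ultimately show ?thesis using measure_pmf.prob_compl[of Bad "gnp n p"] by simp
qed

theorem mainTheorem11:
  "\<exists>\<beta>::real. \<beta> > 0 \<and>
     (\<forall>(r :: nat \<Rightarrow> nat) (p :: nat \<Rightarrow> real).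
        (\<forall>n. 0 \<le> p n \<and> p n \<le> 1) \<longrightarrow>
        (\<forall>\<^sub>F n in sequentially. 4 \<le> r n) \<longrightarrow>
        (\<lambda>n. real (r n)) \<in> o(\<lambda>n. ln (real n)) \<longrightarrow>
        (\<forall>\<^sub>F n in sequentially. p n \<ge> \<beta> * ln (real n) / (real (r n) * real n)) \<longrightarrow>
        ((\<lambda>n. measure_pmf.prob (gnp n (p n))
            {G. \<forall>v \<in> low_vertices n (p n) G.
                  card (component (low_vertices n (p n) G) G v) \<le> r n - 3})
          \<longlonglongrightarrow> 1))"
proof (rule exI[of _ 320], intro conjI allI impI)
  fix r :: "nat \<Rightarrow> nat" and p :: "nat \<Rightarrow> real"
  assume p: "\<forall>n. 0 \<le> p n \<and> p n \<le> 1" and r: "\<forall>\<^sub>F n in sequentially. 4 \<le> r n"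
    and r_small: "(\<lambda>n. real (r n)) \<in> o(\<lambda>n. ln (real n))"
    and p_large: "\<forall>\<^sub>F n in sequentially. p n \<ge> 320 * ln (real n) / (real (r n) * real n)"
  have "\<forall>\<^sub>F n in sequentially. real (r n) \<le> 1/32 * norm (ln (real n))"
    using landau_o.smallD[OF r_small, of "1/32"] by simp
  with r p_large eventually_ge_at_top[of 3]
  have lower: "\<forall>\<^sub>F n in sequentially. 1 - 1 / real n \<le> measure_pmf.prob (gnp n (p n))
          {G. \<forall>v \<in> low_vertices n (p n) G. card (component (low_vertices n (p n) G) G v) \<le> r n - 3}"
  proof eventually_elim
    case (elim n)
    thus ?case
      using p by (intro prob_low_components_small_ge) (auto simp: field_simps)
  qed
  have upper: "\<forall>\<^sub>F n in sequentially. measure_pmf.prob (gnp n (p n))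
          {G. \<forall>v \<in> low_vertices n (p n) G. card (component (low_vertices n (p n) G) G v) \<le> r n - 3} \<le> 1"
    by (intro always_eventually allI measure_pmf.prob_le_1)
  have "(\<lambda>n. 1 - 1 / real n) \<longlonglongrightarrow> 1"
    using tendsto_diff[OF tendsto_const lim_1_over_n] by simp
  from tendsto_sandwich[OF lower upper this tendsto_const]
  show "(\<lambda>n. measure_pmf.prob (gnp n (p n))
          {G. \<forall>v \<in> low_vertices n (p n) G. card (component (low_vertices n (p n) G) G v) \<le> r n - 3})
        \<longlonglongrightarrow> 1" .
qed simp

end
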